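(* For every positive integer $d$, there exists a binary matrix $M$ such that $R_{binary}(M)\ge 4d$ and $R_{\mathbb{R}}(M)=3d$.
   Context: $R_{\mathbb{R}}$ is the usual rank over the reals. For a binary $n\times m$ matrix $M$, the binary rank $R_{binary}(M)$ is the least $k$ such that $M=UV$ with $U\in\{0,1\}^{n\times k}$, $V\in\{0,1\}^{k\times m}$, product computed with ordinary arithmetic. *)

theory Defs
  imports "Jordan_Normal_Form.DL_Rank"
begin

definition binary_mat :: "real mat \<Rightarrow> bool" where
  "binary_mat M \<longleftrightarrow> (\<forall>i < dim_row M. \<forall>j < dim_col M. M $$ (i, j) \<in> {0, 1})"

definition real_rank :: "real mat \<Rightarrow> nat" where
  "real_rank M = vec_space.rank (dim_row M) M"

definition binary_rank :: "real mat \<Rightarrow> nat" where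
  "binary_rank M = (LEAST k. \<exists>U V. U \<in> carrier_mat (dim_row M) k \<and> V \<in> carrier_mat k (dim_col M)
      \<and> binary_mat U \<and> binary_mat V \<and> M = U * V)"

end

theory Submission
  imports Defs
begin

(* The matrix is block diagonal with d copies of I + P, where P is the permutation matrix of the
   4-cycle. In each block the last column is the alternating sum of the other three, so the real
   rank is at most 3d; deleting the corner entry of every block is a rank-d perturbation that
   leaves a unit upper triangular matrix, so the real rank is at least 4d - d.
   A binary factorization M = U V of width k writes the 8d ones of M as a sum of k all-ones
   rectangles inside M. Every row and column of M has two ones and no two rows share two
   columns, so such a rectangle has at most 2 cells, whence 8d <= 2k. *)

lemma rank_sum_outer_le:
  fixes f g :: "'t \<Rightarrow> nat \<Rightarrow> 'a :: field"
  assumes "finite T"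
  shows "vec_space.rank n (mat n m (\<lambda>(i, j). \<Sum>t\<in>T. f t i * g t j)) \<le> card T"
  using assms
proof (induction T rule: finite_induct)
  case empty
  have "mat n m (\<lambda>(i, j). \<Sum>t\<in>{}. f t i * g t j) = 0\<^sub>m n m"
    by (rule eq_matI) auto
  then show ?case by (simp only: vec_space.rank_0I)
next
  case (insert t T)
  have split: "mat n m (\<lambda>(i, j). \<Sum>t\<in>insert t T. f t i * g t j)
      = mat n m (\<lambda>(i, j). f t i * g t j) + mat n m (\<lambda>(i, j). \<Sum>t\<in>T. f t i * g t j)"
    using insert.hyps by (intro eq_matI) auto
  have "vec_space.rank n (mat n m (\<lambda>(i, j). f t i * g t j)) \<le> 1"
    by (rule vec_space.rank_le_1_product_entries[of _ n m "f t" "g t"]) auto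
  then show ?case
    using vec_space.rank_subadditive[of "mat n m (\<lambda>(i, j). f t i * g t j)" n m
        "mat n m (\<lambda>(i, j). \<Sum>t\<in>T. f t i * g t j)"] insert
    unfolding split by auto
qed

lemma binary_rank_factorization:
  assumes "binary_mat M"
  obtains U V where "U \<in> carrier_mat (dim_row M) (binary_rank M)"
    "V \<in> carrier_mat (binary_rank M) (dim_col M)" "binary_mat U" "binary_mat V" "M = U * V"
proof -
  have "\<exists>U V. U \<in> carrier_mat (dim_row M) (dim_col M) \<and> V \<in> carrier_mat (dim_col M) (dim_col M)
      \<and> binary_mat U \<and> binary_mat V \<and> M = U * V"
    using assms by (intro exI[of _ M] exI[of _ "1\<^sub>m (dim_col M)"]) (auto simp: binary_mat_def)
  then have "\<exists>U V. U \<in> carrier_mat (dim_row M) (binary_rank M) \<and> V \<in> carrier_mat (binary_rank M) (dim_col M)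
      \<and> binary_mat U \<and> binary_mat V \<and> M = U * V"
    unfolding binary_rank_def by (rule LeastI)
  with that show ?thesis by blast
qed

lemma index_mult_mat_sum:
  assumes "A \<in> carrier_mat n k" "B \<in> carrier_mat k m" "i < n" "j < m"
  shows "(A * B) $$ (i, j) = (\<Sum>t<k. A $$ (i, t) * B $$ (t, j))"
  using assms by (auto simp: scalar_prod_def lessThan_atLeast0 intro!: sum.cong)

lemma sum_of_bool_eq_card: "(\<Sum>i<(n::nat). of_bool (P i) :: real) = card {i. i < n \<and> P i}"
  using sum.inter_filter[OF finite_lessThan[of n], of "\<lambda>_. 1::real" P] by (simp add: of_bool_def)

lemma sum_entries_mult_binary:
  assumes U: "U \<in> carrier_mat n k" "binary_mat U" and V: "V \<in> carrier_mat k m" "binary_mat V"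
  shows "(\<Sum>i<n. \<Sum>j<m. (U * V) $$ (i, j))
    = (\<Sum>t<k. real (card {i. i < n \<and> U $$ (i, t) = 1} * card {j. j < m \<and> V $$ (t, j) = 1}))"
proof -
  have U01: "U $$ (i, t) = of_bool (U $$ (i, t) = 1)" if "i < n" "t < k" for i t
    using U that unfolding binary_mat_def by auto
  have V01: "V $$ (t, j) = of_bool (V $$ (t, j) = 1)" if "t < k" "j < m" for t j
    using V that unfolding binary_mat_def by auto
  have "(\<Sum>i<n. \<Sum>j<m. (U * V) $$ (i, j)) = (\<Sum>i<n. \<Sum>j<m. \<Sum>t<k. U $$ (i, t) * V $$ (t, j))"
    using U V by (intro sum.cong refl) (simp add: index_mult_mat_sum del: index_mult_mat)
  also have "\<dots> = (\<Sum>i<n. \<Sum>t<k. \<Sum>j<m. U $$ (i, t) * V $$ (t, j))"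
    by (rule sum.cong[OF refl], rule sum.swap)
  also have "\<dots> = (\<Sum>t<k. \<Sum>i<n. \<Sum>j<m. U $$ (i, t) * V $$ (t, j))"
    by (rule sum.swap)
  also have "\<dots> = (\<Sum>t<k. (\<Sum>i<n. U $$ (i, t)) * (\<Sum>j<m. V $$ (t, j)))"
    by (simp add: sum_product)
  also have "\<dots> = (\<Sum>t<k. real (card {i. i < n \<and> U $$ (i, t) = 1} * card {j. j < m \<and> V $$ (t, j) = 1}))"
  proof (rule sum.cong[OF refl])
    fix t assume "t \<in> {..<k}"
    then have "(\<Sum>i<n. U $$ (i, t)) = (\<Sum>i<n. of_bool (U $$ (i, t) = 1))"
      and "(\<Sum>j<m. V $$ (t, j)) = (\<Sum>j<m. of_bool (V $$ (t, j) = 1))"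
      using U01 V01 by (auto intro: sum.cong)
    then show "(\<Sum>i<n. U $$ (i, t)) * (\<Sum>j<m. V $$ (t, j))
      = real (card {i. i < n \<and> U $$ (i, t) = 1} * card {j. j < m \<and> V $$ (t, j) = 1})"
      by (simp add: sum_of_bool_eq_card)
  qed
  finally show ?thesis .
qed

lemma sum_entries_le_binary_rank:
  assumes M: "binary_mat M"
    and rectangle: "\<And>R C. R \<subseteq> {..<dim_row M} \<Longrightarrow> C \<subseteq> {..<dim_col M} \<Longrightarrow>
      (\<forall>i\<in>R. \<forall>j\<in>C. M $$ (i, j) = 1) \<Longrightarrow> card R * card C \<le> c"
  shows "(\<Sum>i<dim_row M. \<Sum>j<dim_col M. M $$ (i, j)) \<le> real (c * binary_rank M)"
proof -
  obtain U V where U: "U \<in> carrier_mat (dim_row M) (binary_rank M)" "binary_mat U"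
    and V: "V \<in> carrier_mat (binary_rank M) (dim_col M)" "binary_mat V" and UV: "M = U * V"
    using binary_rank_factorization[OF M] by metis
  define R where "R t = {i. i < dim_row M \<and> U $$ (i, t) = 1}" for t
  define C where "C t = {j. j < dim_col M \<and> V $$ (t, j) = 1}" for t
  have "M $$ (i, j) = 1" if t: "t < binary_rank M" and "i \<in> R t" "j \<in> C t" for t i j
  proof -
    have ij: "i < dim_row M" "j < dim_col M" using that unfolding R_def C_def by auto
    have "1 = U $$ (i, t) * V $$ (t, j)" using that unfolding R_def C_def by simp
    also have "\<dots> \<le> (\<Sum>s<binary_rank M. U $$ (i, s) * V $$ (s, j))"
    proof (rule member_le_sum)
      fix s assume "s \<in> {..<binary_rank M} - {t}"
      then have "U $$ (i, s) \<in> {0, 1}" "V $$ (s, j) \<in> {0, 1}"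
        using U V ij unfolding binary_mat_def by auto
      then show "0 \<le> U $$ (i, s) * V $$ (s, j)" by auto
    qed (use t in auto)
    also have "\<dots> = M $$ (i, j)"
      using index_mult_mat_sum[OF U(1) V(1) ij] by (simp add: UV)
    moreover have "M $$ (i, j) \<in> {0, 1}" using M ij unfolding binary_mat_def by blast
    ultimately show ?thesis by auto
  qed
  then have "card (R t) * card (C t) \<le> c" if "t < binary_rank M" for t
    using that by (intro rectangle) (auto simp: R_def C_def)
  then have "(\<Sum>t<binary_rank M. real (card (R t) * card (C t))) \<le> (\<Sum>t<binary_rank M. real c)"
    by (intro sum_mono of_nat_mono) simp
  moreover have "(\<Sum>i<dim_row M. \<Sum>j<dim_col M. M $$ (i, j))
      = (\<Sum>t<binary_rank M. real (card (R t) * card (C t)))"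
    using sum_entries_mult_binary[OF U V] unfolding UV[symmetric] R_def C_def .
  ultimately show ?thesis by (simp add: mult.commute)
qed

lemma rectangle_card_le:
  assumes "finite R" "finite C" and rectangle: "\<forall>i\<in>R. \<forall>j\<in>C. P i j"
    and rows: "\<And>i. finite {j. P i j} \<and> card {j. P i j} \<le> c"
    and cols: "\<And>j. finite {i. P i j} \<and> card {i. P i j} \<le> c"
    and no_square: "\<And>i i' j j'. P i j \<Longrightarrow> P i j' \<Longrightarrow> P i' j \<Longrightarrow> P i' j' \<Longrightarrow> i = i' \<or> j = j'"
  shows "card R * card C \<le> c"
proof (cases "R = {} \<or> C = {}")
  case True
  then show ?thesis by auto
next
  case False
  then obtain i j where ij: "i \<in> R" "j \<in> C" by blast
  have "R = {i} \<or> C = {j}"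
    using ij rectangle no_square by blast
  then show ?thesis
  proof
    assume "R = {i}"
    then have "C \<subseteq> {j. P i j}" using rectangle by auto
    then have "card C \<le> c" using rows[of i] by (meson card_mono order_trans)
    then show ?thesis using \<open>R = {i}\<close> by simp
  next
    assume "C = {j}"
    then have "R \<subseteq> {i. P i j}" using rectangle by auto
    then have "card R \<le> c" using cols[of j] by (meson card_mono order_trans)
    then show ?thesis using \<open>C = {j}\<close> by simp
  qed
qed

lemma rank_unit_upper_triangular:
  assumes A: "A \<in> carrier_mat n n" and "upper_triangular A" and "\<And>i. i < n \<Longrightarrow> A $$ (i, i) = 1"
  shows "vec_space.rank n A = n"
proof -
  have "diag_mat A = replicate n 1"
    using A assms(3) by (auto simp: diag_mat_def intro: nth_equalityI)
  then have "det A = 1" using det_upper_triangular[OF assms(2) A] by simp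
  then show ?thesis using vec_space.det_rank_iff[OF A] by simp
qed

lemma eq_if_div_mod_eq:
  fixes i j n :: nat
  assumes "i div n = j div n" "i mod n = j mod n"
  shows "i = j"
  using assms div_mult_mod_eq by metis

definition cyc_succ :: "nat \<Rightarrow> nat" where
  "cyc_succ i = 4 * (i div 4) + (i + 1) mod 4"

definition cyc_pred :: "nat \<Rightarrow> nat" where
  "cyc_pred j = 4 * (j div 4) + (j + 3) mod 4"

lemma cyc_succ_div [simp]: "cyc_succ i div 4 = i div 4"
  and cyc_succ_mod [simp]: "cyc_succ i mod 4 = (i + 1) mod 4"
  unfolding cyc_succ_def by simp_all

lemma cyc_pred_div [simp]: "cyc_pred j div 4 = j div 4"
  and cyc_pred_mod [simp]: "cyc_pred j mod 4 = (j + 3) mod 4"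
  unfolding cyc_pred_def by simp_all

lemma cyc_succ_neq: "cyc_succ i \<noteq> i"
proof
  assume "cyc_succ i = i"
  then have "(i + 1) mod 4 = i mod 4" by (metis cyc_succ_mod)
  then show False by (simp add: mod_Suc split: if_splits)
qed

lemma cyc_succ_cyc_succ_neq: "cyc_succ (cyc_succ i) \<noteq> i"
proof
  assume twice: "cyc_succ (cyc_succ i) = i"
  have "cyc_succ (cyc_succ i) mod 4 = (cyc_succ i mod 4 + 1) mod 4"
    by (simp only: cyc_succ_mod[of "cyc_succ i"] mod_add_left_eq)
  also have "\<dots> = ((i + 1) mod 4 + 1) mod 4" by (simp only: cyc_succ_mod)
  also have "\<dots> = Suc (Suc i) mod 4" by (simp add: mod_Suc_eq)
  finally have "Suc (Suc i) mod 4 = i mod 4" by (simp only: twice)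
  then show False by (auto simp: mod_Suc split: if_splits)
qed

lemma cyc_succ_inj:
  assumes "cyc_succ i = cyc_succ i'"
  shows "i = i'"
proof (rule eq_if_div_mod_eq)
  show "i div 4 = i' div 4" using cyc_succ_div[of i] cyc_succ_div[of i'] assms by simp
  have "(i + 1) mod 4 = (i' + 1) mod 4" using cyc_succ_mod[of i] cyc_succ_mod[of i'] assms by simp
  then show "i mod 4 = i' mod 4" by (auto simp: mod_Suc split: if_splits)
qed

lemma cyc_succ_cyc_pred [simp]: "cyc_succ (cyc_pred j) = j"
proof (rule eq_if_div_mod_eq[of _ 4])
  have "cyc_succ (cyc_pred j) mod 4 = (cyc_pred j mod 4 + 1) mod 4"
    by (simp only: cyc_succ_mod mod_add_left_eq)
  also have "\<dots> = ((j + 3) mod 4 + 1) mod 4" by (simp only: cyc_pred_mod)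
  also have "\<dots> = j mod 4" by (simp only: mod_add_left_eq) simp
  finally show "cyc_succ (cyc_pred j) mod 4 = j mod 4" .
qed simp

lemma cyc_succ_eq_iff: "cyc_succ i = j \<longleftrightarrow> i = cyc_pred j"
  using cyc_succ_inj[of i "cyc_pred j"] by auto

lemma cyc_succ_less:
  assumes "i < 4 * d"
  shows "cyc_succ i < 4 * d"
proof -
  have "i div 4 < d" using assms by (simp add: less_mult_imp_div_less mult.commute)
  moreover have "(i + 1) mod 4 < 4" by simp
  ultimately show ?thesis unfolding cyc_succ_def by linarith
qed

definition cyc_adj :: "nat \<Rightarrow> nat \<Rightarrow> bool" where
  "cyc_adj i j \<longleftrightarrow> j = i \<or> j = cyc_succ i"

lemma cyc_adj_iff_div_mod:
  "cyc_adj i j \<longleftrightarrow> j div 4 = i div 4 \<and> (j mod 4 = i mod 4 \<or> j mod 4 = (i + 1) mod 4)"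
proof
  assume "cyc_adj i j"
  then show "j div 4 = i div 4 \<and> (j mod 4 = i mod 4 \<or> j mod 4 = (i + 1) mod 4)"
    unfolding cyc_adj_def by auto
next
  assume "j div 4 = i div 4 \<and> (j mod 4 = i mod 4 \<or> j mod 4 = (i + 1) mod 4)"
  then have "j = i \<or> j = cyc_succ i" using eq_if_div_mod_eq[of j 4] by auto
  then show "cyc_adj i j" unfolding cyc_adj_def .
qed

lemma cyc_adj_block:
  assumes "c < 4"
  shows "cyc_adj i (4 * q + c) \<longleftrightarrow> i div 4 = q \<and> (c = i mod 4 \<or> c = (i mod 4 + 1) mod 4)"
  using assms by (auto simp: cyc_adj_iff_div_mod mod_Suc_eq)

lemma cyc_adj_below_diag: "cyc_adj i j \<and> j < i \<longleftrightarrow> i mod 4 = 3 \<and> j = 4 * (i div 4)"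
proof
  assume "cyc_adj i j \<and> j < i"
  then have j: "j = cyc_succ i" and "cyc_succ i < i" unfolding cyc_adj_def by auto
  then have "(i + 1) mod 4 < i mod 4"
    unfolding cyc_succ_def by (metis add_less_cancel_left div_mult_mod_eq mult.commute)
  then have "i mod 4 = 3" and "(i + 1) mod 4 = 0" by (auto simp: mod_Suc split: if_splits)
  then show "i mod 4 = 3 \<and> j = 4 * (i div 4)" unfolding j cyc_succ_def by simp
next
  assume i: "i mod 4 = 3 \<and> j = 4 * (i div 4)"
  then have "(i + 1) mod 4 = 0" by (simp add: mod_Suc)
  then have "j = cyc_succ i" using i unfolding cyc_succ_def by simp
  moreover have "j < i" using i div_mult_mod_eq[of i 4] by linarith
  ultimately show "cyc_adj i j \<and> j < i" unfolding cyc_adj_def by simp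
qed

lemma cyc_adj_last_col:
  "of_bool (cyc_adj i (4 * q + 3)) =
     (of_bool (cyc_adj i (4 * q)) - of_bool (cyc_adj i (4 * q + 1)) + of_bool (cyc_adj i (4 * q + 2)) :: real)"
proof -
  have "i mod 4 < 4" by simp
  then consider "i mod 4 = 0" | "i mod 4 = 1" | "i mod 4 = 2" | "i mod 4 = 3" by linarith
  then show ?thesis
    using cyc_adj_block[of 0 i q] cyc_adj_block[of 1 i q] cyc_adj_block[of 2 i q] cyc_adj_block[of 3 i q]
    by cases auto
qed

definition cycle_block_mat :: "nat \<Rightarrow> real mat" where
  "cycle_block_mat d = mat (4 * d) (4 * d) (\<lambda>(i, j). of_bool (cyc_adj i j))"

lemma cycle_block_mat_carrier: "cycle_block_mat d \<in> carrier_mat (4 * d) (4 * d)"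
  unfolding cycle_block_mat_def by simp

lemma cycle_block_mat_index:
  "i < 4 * d \<Longrightarrow> j < 4 * d \<Longrightarrow> cycle_block_mat d $$ (i, j) = of_bool (cyc_adj i j)"
  unfolding cycle_block_mat_def by simp

lemma dim_cycle_block_mat [simp]:
  "dim_row (cycle_block_mat d) = 4 * d" "dim_col (cycle_block_mat d) = 4 * d"
  unfolding cycle_block_mat_def by simp_all

lemma binary_cycle_block_mat: "binary_mat (cycle_block_mat d)"
  by (simp add: binary_mat_def cycle_block_mat_index)

lemma cyc_adj_row: "{j. cyc_adj i j} = {i, cyc_succ i}"
  unfolding cyc_adj_def by auto

lemma cyc_adj_col: "{i. cyc_adj i j} = {j, cyc_pred j}"
  unfolding cyc_adj_def eq_commute[of _ "cyc_succ _"] cyc_succ_eq_iff by auto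

lemma cyc_adj_no_square:
  assumes "cyc_adj i j" "cyc_adj i j'" "cyc_adj i' j" "cyc_adj i' j'"
  shows "i = i' \<or> j = j'"
  using assms cyc_succ_neq[of i] cyc_succ_neq[of i'] cyc_succ_cyc_succ_neq[of i] cyc_succ_cyc_succ_neq[of i']
    cyc_succ_inj[of i i']
  unfolding cyc_adj_def by auto

lemma cycle_block_mat_rectangle:
  assumes "R \<subseteq> {..<4 * d}" "C \<subseteq> {..<4 * d}" "\<forall>i\<in>R. \<forall>j\<in>C. cycle_block_mat d $$ (i, j) = 1"
  shows "card R * card C \<le> 2"
proof (rule rectangle_card_le[where P = cyc_adj])
  show "finite R" "finite C" using assms(1,2) finite_subset by blast+
  show "\<forall>i\<in>R. \<forall>j\<in>C. cyc_adj i j"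
  proof (intro ballI)
    fix i j assume ij: "i \<in> R" "j \<in> C"
    then have "i < 4 * d" "j < 4 * d" using assms(1,2) by auto
    moreover have "cycle_block_mat d $$ (i, j) = 1" using assms(3) ij by blast
    ultimately show "cyc_adj i j" by (simp add: cycle_block_mat_index)
  qed
  show "finite {j. cyc_adj i j} \<and> card {j. cyc_adj i j} \<le> 2" for i
    unfolding cyc_adj_row by (simp add: card_insert_le_m1)
  show "finite {i. cyc_adj i j} \<and> card {i. cyc_adj i j} \<le> 2" for j
    unfolding cyc_adj_col by (simp add: card_insert_le_m1)
qed (rule cyc_adj_no_square)

lemma cycle_block_mat_sum_entries: "(\<Sum>i<4 * d. \<Sum>j<4 * d. cycle_block_mat d $$ (i, j)) = 8 * d"
proof -
  have "(\<Sum>j<4 * d. cycle_block_mat d $$ (i, j)) = 2" if "i < 4 * d" for i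
  proof -
    have "{j. j < 4 * d \<and> cyc_adj i j} = {i, cyc_succ i}"
      using that cyc_succ_less unfolding cyc_adj_def by auto
    then show ?thesis
      using that cyc_succ_neq[of i] by (simp add: cycle_block_mat_index sum_of_bool_eq_card card_2_iff)
  qed
  then show ?thesis by simp
qed

lemma binary_rank_cycle_block_mat: "4 * d \<le> binary_rank (cycle_block_mat d)"
proof -
  have "(\<Sum>i<dim_row (cycle_block_mat d). \<Sum>j<dim_col (cycle_block_mat d). cycle_block_mat d $$ (i, j))
      \<le> real (2 * binary_rank (cycle_block_mat d))"
    by (rule sum_entries_le_binary_rank[OF binary_cycle_block_mat])
      (rule cycle_block_mat_rectangle[of _ d], simp_all)
  then have "real (8 * d) \<le> real (2 * binary_rank (cycle_block_mat d))"
    by (simp add: cycle_block_mat_sum_entries)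
  then show ?thesis by linarith
qed

(* Column c of a block of I + P is the combination of its columns 0, 1, 2 with these coefficients. *)
definition col_coeff :: "nat \<Rightarrow> nat \<Rightarrow> real" where
  "col_coeff s c = (if c = 3 then (-1) ^ s else of_bool (s = c))"

lemma cyc_adj_col_expansion:
  assumes "c < 4"
  shows "of_bool (cyc_adj i (4 * q + c)) = (\<Sum>s<3. of_bool (cyc_adj i (4 * q + s)) * col_coeff s c :: real)"
proof -
  have sum3: "(\<Sum>s<3. h s) = h 0 + h 1 + h 2" for h :: "nat \<Rightarrow> real"
    by (simp add: eval_nat_numeral)
  consider "c = 0" | "c = 1" | "c = 2" | "c = 3" using assms by linarith
  then show ?thesis
    unfolding sum3 by cases (simp_all add: col_coeff_def cyc_adj_last_col)
qed

lemma real_rank_cycle_block_mat_le: "real_rank (cycle_block_mat d) \<le> 3 * d"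
proof -
  define f where "f = (\<lambda>(b, s) i. of_bool (cyc_adj i (4 * b + s)) :: real)"
  define g where "g = (\<lambda>(b, s) j. if j div 4 = b then col_coeff s (j mod 4) else 0)"
  have "cycle_block_mat d = mat (4 * d) (4 * d) (\<lambda>(i, j). \<Sum>t\<in>{..<d} \<times> {..<3}. f t i * g t j)"
  proof (rule eq_matI)
    fix i j assume "i < dim_row (mat (4 * d) (4 * d) (\<lambda>(i, j). \<Sum>t\<in>{..<d} \<times> {..<3}. f t i * g t j))"
      and "j < dim_col (mat (4 * d) (4 * d) (\<lambda>(i, j). \<Sum>t\<in>{..<d} \<times> {..<3}. f t i * g t j))"
    then have ij: "i < 4 * d" "j < 4 * d" by auto
    have "(\<Sum>t\<in>{..<d} \<times> {..<3}. f t i * g t j)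
        = (\<Sum>b<d. if b = j div 4 then \<Sum>s<3. f (b, s) i * col_coeff s (j mod 4) else 0)"
      unfolding sum.cartesian_product' by (intro sum.cong refl) (auto simp: g_def)
    also have "\<dots> = (\<Sum>s<3. of_bool (cyc_adj i (4 * (j div 4) + s)) * col_coeff s (j mod 4))"
      using ij by (simp add: sum.delta' f_def)
    also have "\<dots> = of_bool (cyc_adj i (4 * (j div 4) + j mod 4))"
      by (rule cyc_adj_col_expansion[symmetric]) simp
    also have "\<dots> = of_bool (cyc_adj i j)" by simp
    finally show "cycle_block_mat d $$ (i, j)
        = mat (4 * d) (4 * d) (\<lambda>(i, j). \<Sum>t\<in>{..<d} \<times> {..<3}. f t i * g t j) $$ (i, j)"
      using ij by (simp add: cycle_block_mat_index)
  qed (simp_all add: cycle_block_mat_def)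
  moreover have "vec_space.rank (4 * d) (mat (4 * d) (4 * d) (\<lambda>(i, j). \<Sum>t\<in>{..<d} \<times> {..<3}. f t i * g t j))
      \<le> card ({..<d} \<times> {..<3::nat})"
    by (rule rank_sum_outer_le) simp
  ultimately show ?thesis by (simp add: real_rank_def card_cartesian_product mult.commute)
qed

lemma sum_block_corner_indicator:
  fixes i j d :: nat
  assumes "i < 4 * d"
  shows "(\<Sum>b<d. of_bool (i = 4 * b + 3) * of_bool (j = 4 * b) :: real)
    = of_bool (i mod 4 = 3 \<and> j = 4 * (i div 4))"
proof -
  have "i = 4 * b + 3 \<longleftrightarrow> b = i div 4 \<and> i mod 4 = 3" for b
  proof
    assume "b = i div 4 \<and> i mod 4 = 3"
    then show "i = 4 * b + 3" using mult_div_mod_eq[of 4 i] by linarith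
  qed simp
  then have "(\<Sum>b<d. of_bool (i = 4 * b + 3) * of_bool (j = 4 * b) :: real)
      = (\<Sum>b<d. if b = i div 4 then of_bool (i mod 4 = 3 \<and> j = 4 * (i div 4)) else 0)"
    by (intro sum.cong refl) auto
  also have "\<dots> = of_bool (i mod 4 = 3 \<and> j = 4 * (i div 4))"
    using assms by (simp add: sum.delta' less_mult_imp_div_less mult.commute)
  finally show ?thesis .
qed

lemma real_rank_cycle_block_mat_ge: "3 * d \<le> real_rank (cycle_block_mat d)"
proof -
  define N :: "real mat" where
    "N = mat (4 * d) (4 * d) (\<lambda>(i, j). \<Sum>b\<in>{..<d}. - of_bool (i = 4 * b + 3) * of_bool (j = 4 * b))"
  define X :: "real mat" where
    "X = mat (4 * d) (4 * d) (\<lambda>(i, j). of_bool (cyc_adj i j \<and> i \<le> j))"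
  have "vec_space.rank (4 * d) N \<le> card {..<d}"
    unfolding N_def by (rule rank_sum_outer_le) simp
  then have rank_N: "vec_space.rank (4 * d) N \<le> d" by simp
  have "X = cycle_block_mat d + N"
  proof (rule eq_matI)
    fix i j assume "i < dim_row (cycle_block_mat d + N)" "j < dim_col (cycle_block_mat d + N)"
    then have ij: "i < 4 * d" "j < 4 * d" by (auto simp: N_def)
    have "of_bool (cyc_adj i j \<and> i \<le> j) = (of_bool (cyc_adj i j) - of_bool (cyc_adj i j \<and> j < i) :: real)"
      by auto
    also have "\<dots> = of_bool (cyc_adj i j) - (\<Sum>b<d. of_bool (i = 4 * b + 3) * of_bool (j = 4 * b))"
      using ij by (simp only: cyc_adj_below_diag sum_block_corner_indicator)
    finally show "X $$ (i, j) = (cycle_block_mat d + N) $$ (i, j)"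
      using ij by (simp add: X_def N_def cycle_block_mat_index sum_negf)
  qed (auto simp: X_def N_def)
  moreover have "vec_space.rank (4 * d) X = 4 * d"
    by (rule rank_unit_upper_triangular) (auto simp: X_def upper_triangular_def cyc_adj_def)
  moreover have "vec_space.rank (4 * d) (cycle_block_mat d + N)
      \<le> vec_space.rank (4 * d) (cycle_block_mat d) + vec_space.rank (4 * d) N"
    by (rule vec_space.rank_subadditive) (auto simp: cycle_block_mat_carrier N_def)
  ultimately show ?thesis using rank_N unfolding real_rank_def by simp
qed

theorem theorem3:
  fixes d :: nat
  assumes "d > 0"
  shows "\<exists>M :: real mat. binary_mat M \<and> binary_rank M \<ge> 4 * d \<and> real_rank M = 3 * d"
proof (intro exI conjI)
  show "binary_mat (cycle_block_mat d)" by (rule binary_cycle_block_mat)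
  show "binary_rank (cycle_block_mat d) \<ge> 4 * d" by (rule binary_rank_cycle_block_mat)
  show "real_rank (cycle_block_mat d) = 3 * d"
    using real_rank_cycle_block_mat_le real_rank_cycle_block_mat_ge by (rule le_antisym)
qed

end
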